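(* Let $D$ be an integral domain, $S$ a multiplicative subset of $D$, and $M$ a torsion-free $D$-module which is a $w$-module. Let $w$ denote the $w$-operation on $D$-modules and $\overline{w}$ the $w$-operation on $D_S$-modules. Let $L$ be a nonzero $D$-submodule of $M$. Then: (1) If $L$ is a $w$-submodule of $M$, then $L_S\cap M$ is a $w$-submodule of $M$. (2) If $L_S$ is a $\overline{w}$-submodule of $M_S$, then $L_S\cap M$ is a $w$-submodule of $M$. (3) $(L_w)_S\subseteq (L_S)_{\overline{w}}$ and $((L_w)_S)_{\overline{w}}=(L_S)_{\overline{w}}$.
   Context: Let $K$ be the quotient field of $D$. For a nonzero fractional ideal $I$, $I^{-1}=\{a\in K\mid aI\subseteq D\}$, $I_v=(I^{-1})^{-1}$. $J\in\mathrm{GV}(D)$ means $J$ is a finitely generated ideal of $D$ with $J_v=D$. For a torsion-free $D$-module $N$, $N_w=\{x\in N\otimes_D K\mid xJ\subseteq N\text{ for some }J\in\mathrm{GV}(D)\}$; $N$ is a $w$-module if $N_w=N$; a submodule $L$ of $M$ is a $w$-submodule if $L_w=L$. The $\overline{w}$-operation is defined analogously over the domain $D_S$ using $\mathrm{GV}(D_S)$. $M$ is identified with its image in $M_S$, and $L_S\cap M$ is taken inside $M_S$. *)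

theory Defs
  imports Main "HOL.Vector_Spaces"
begin

text \<open>The quotient field K of D is the type 'k (a field); D is a subring of 'k
whose fraction field is all of 'k. A torsion-free D-module N is identified with its image in
the K-vector space N (x) K; all modules live inside one K-vector space 'v with scalar
multiplication scale. For a D-submodule N of 'v, N (x)_D K is the K-span of N.\<close>

definition is_subring :: "'k::field set \<Rightarrow> bool" where
  "is_subring R \<longleftrightarrow> 0 \<in> R \<and> 1 \<in> R \<and> (\<forall>a\<in>R. \<forall>b\<in>R. a + b \<in> R \<and> a - b \<in> R \<and> a * b \<in> R)"

definition has_quotient_field :: "'k::field set \<Rightarrow> bool" where
  "has_quotient_field R \<longleftrightarrow> (\<forall>x::'k. \<exists>a\<in>R. \<exists>b\<in>R. b \<noteq> 0 \<and> x = a / b)"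

definition mult_subset :: "'k::field set \<Rightarrow> 'k set \<Rightarrow> bool" where
  "mult_subset R S \<longleftrightarrow> S \<subseteq> R \<and> 1 \<in> S \<and> 0 \<notin> S \<and> (\<forall>s\<in>S. \<forall>t\<in>S. s * t \<in> S)"

definition loc_ring :: "'k::field set \<Rightarrow> 'k set \<Rightarrow> 'k set" where
  "loc_ring R S = {a / s | a s. a \<in> R \<and> s \<in> S}"

definition loc_mod :: "('k::field \<Rightarrow> 'v \<Rightarrow> 'v) \<Rightarrow> 'k set \<Rightarrow> 'v set \<Rightarrow> 'v set" where
  "loc_mod scale S N = {scale (inverse s) x | x s. x \<in> N \<and> s \<in> S}"

definition is_submod :: "('k::field \<Rightarrow> 'v::ab_group_add \<Rightarrow> 'v) \<Rightarrow> 'k set \<Rightarrow> 'v set \<Rightarrow> bool" where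
  "is_submod scale R N \<longleftrightarrow> 0 \<in> N \<and> (\<forall>x\<in>N. \<forall>y\<in>N. x + y \<in> N) \<and> (\<forall>r\<in>R. \<forall>x\<in>N. scale r x \<in> N)"

definition frac_inv :: "'k::field set \<Rightarrow> 'k set \<Rightarrow> 'k set" where
  "frac_inv R I = {a. \<forall>x\<in>I. a * x \<in> R}"

definition v_op :: "'k::field set \<Rightarrow> 'k set \<Rightarrow> 'k set" where
  "v_op R I = frac_inv R (frac_inv R I)"

definition is_ideal :: "'k::field set \<Rightarrow> 'k set \<Rightarrow> bool" where
  "is_ideal R J \<longleftrightarrow> J \<subseteq> R \<and> 0 \<in> J \<and> (\<forall>x\<in>J. \<forall>y\<in>J. x + y \<in> J) \<and> (\<forall>r\<in>R. \<forall>x\<in>J. r * x \<in> J)"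

definition fin_gen_ideal :: "'k::field set \<Rightarrow> 'k set \<Rightarrow> bool" where
  "fin_gen_ideal R J \<longleftrightarrow> is_ideal R J \<and>
     (\<exists>F. finite F \<and> F \<subseteq> R \<and> J = {\<Sum>f\<in>F. c f * f | c. \<forall>f\<in>F. c f \<in> R})"

definition GV :: "'k::field set \<Rightarrow> 'k set set" where
  "GV R = {J. fin_gen_ideal R J \<and> v_op R J = R}"

text \<open>w-closure of a module N over the ring R (R = D gives w, R = D_S gives w-bar).\<close>
definition w_cl :: "('k::field \<Rightarrow> 'v::ab_group_add \<Rightarrow> 'v) \<Rightarrow> 'k set \<Rightarrow> 'v set \<Rightarrow> 'v set" where
  "w_cl scale R N = {x \<in> module.span scale N. \<exists>J\<in>GV R. \<forall>j\<in>J. scale j x \<in> N}"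

end

theory Submission
  imports Defs
begin

text \<open>An ideal J lies in GV(R) exactly when it is generated by a finite F \<subseteq> R with
(R :_K F) = R, so x \<in> N_w means that x lies in the K-span of N and F x \<subseteq> N for such an F.
These generating sets are closed under products, and one over D is still one over D_S, because
the finitely many denominators of the elements a f (f \<in> F) can be cleared at once. Clearing the denominators of
F x \<subseteq> L_S gives (L_S)_w \<subseteq> (L_w)_S, and lifting F to D_S gives (L_S)_w \<subseteq> (L_S)_w-bar and
(L_w)_S \<subseteq> (L_S)_w-bar. Intersecting with the w-module M yields (1) and (2), and (3) follows
because w-bar is idempotent.\<close>

lemma sum_mem_add_closed:
  assumes "0 \<in> A" "\<And>a b. a \<in> A \<Longrightarrow> b \<in> A \<Longrightarrow> a + b \<in> A" "\<And>i. i \<in> I \<Longrightarrow> g i \<in> A"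
  shows "sum g I \<in> A"
  using assms(3) by (induction I rule: infinite_finite_induct) (simp_all add: assms(1,2))

definition ideal_span :: "'k::field set \<Rightarrow> 'k set \<Rightarrow> 'k set" where
  "ideal_span R F = {\<Sum>f\<in>F. c f * f | c. \<forall>f\<in>F. c f \<in> R}"

lemma ideal_span_subset:
  assumes R: "is_subring R" and F: "F \<subseteq> R"
  shows "ideal_span R F \<subseteq> R"
proof
  fix x assume "x \<in> ideal_span R F"
  then obtain c where x: "x = (\<Sum>f\<in>F. c f * f)" and c: "\<forall>f\<in>F. c f \<in> R"
    unfolding ideal_span_def by blast
  show "x \<in> R" unfolding x
    by (rule sum_mem_add_closed) (use R F c in \<open>auto simp: is_subring_def\<close>)
qed

lemma mem_ideal_span:
  assumes "is_subring R" "finite F" "f \<in> F"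
  shows "f \<in> ideal_span R F"
proof -
  let ?c = "\<lambda>g. if g = f then 1 else 0"
  have "(\<Sum>g\<in>F. ?c g * g) = (\<Sum>g\<in>F. if g = f then g else 0)" by (rule sum.cong) simp_all
  also have "\<dots> = f" using assms(2,3) by simp
  finally have "(\<Sum>g\<in>F. ?c g * g) = f" .
  moreover have "\<forall>g\<in>F. ?c g \<in> R" using assms(1) by (auto simp: is_subring_def)
  ultimately show ?thesis unfolding ideal_span_def by force
qed

lemma is_ideal_ideal_span:
  assumes R: "is_subring R" and F: "F \<subseteq> R"
  shows "is_ideal R (ideal_span R F)"
  unfolding is_ideal_def
proof (intro conjI ballI)
  show "ideal_span R F \<subseteq> R" using R F by (rule ideal_span_subset)
  show "0 \<in> ideal_span R F" unfolding ideal_span_def mem_Collect_eq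
    using R by (intro exI[where x = "\<lambda>_. 0"]) (simp add: is_subring_def)
next
  fix x y assume "x \<in> ideal_span R F" "y \<in> ideal_span R F"
  then obtain c d where x: "x = (\<Sum>f\<in>F. c f * f)" "\<forall>f\<in>F. c f \<in> R"
    and y: "y = (\<Sum>f\<in>F. d f * f)" "\<forall>f\<in>F. d f \<in> R" unfolding ideal_span_def by blast
  have "x + y = (\<Sum>f\<in>F. (c f + d f) * f)" unfolding x y by (simp add: sum.distrib algebra_simps)
  moreover have "\<forall>f\<in>F. c f + d f \<in> R" using x y R by (auto simp: is_subring_def)
  ultimately show "x + y \<in> ideal_span R F" unfolding ideal_span_def mem_Collect_eq
    by (intro exI[where x = "\<lambda>f. c f + d f"]) simp
next
  fix r x assume r: "r \<in> R" and "x \<in> ideal_span R F"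
  then obtain c where x: "x = (\<Sum>f\<in>F. c f * f)" "\<forall>f\<in>F. c f \<in> R" unfolding ideal_span_def by blast
  have "r * x = (\<Sum>f\<in>F. (r * c f) * f)" unfolding x by (simp add: sum_distrib_left ac_simps)
  moreover have "\<forall>f\<in>F. r * c f \<in> R" using x r R by (auto simp: is_subring_def)
  ultimately show "r * x \<in> ideal_span R F" unfolding ideal_span_def mem_Collect_eq
    by (intro exI[where x = "\<lambda>f. r * c f"]) simp
qed

lemma frac_inv_ideal_span:
  assumes R: "is_subring R" and F: "finite F" "F \<subseteq> R"
  shows "frac_inv R (ideal_span R F) = frac_inv R F"
proof
  show "frac_inv R (ideal_span R F) \<subseteq> frac_inv R F"
    using mem_ideal_span[OF R F(1)] unfolding frac_inv_def by blast
  show "frac_inv R F \<subseteq> frac_inv R (ideal_span R F)"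
  proof (clarsimp simp: frac_inv_def ideal_span_def)
    fix a c assume a: "\<forall>f\<in>F. a * f \<in> R" and c: "\<forall>f\<in>F. c f \<in> R"
    have "a * (\<Sum>f\<in>F. c f * f) = (\<Sum>f\<in>F. c f * (a * f))" by (simp add: sum_distrib_left ac_simps)
    also have "\<dots> \<in> R" by (rule sum_mem_add_closed) (use R a c in \<open>auto simp: is_subring_def\<close>)
    finally show "a * (\<Sum>f\<in>F. c f * f) \<in> R" .
  qed
qed

lemma frac_inv_self:
  assumes "is_subring R"
  shows "frac_inv R R = R"
proof
  show "frac_inv R R \<subseteq> R"
  proof
    fix a assume "a \<in> frac_inv R R"
    then have "a * 1 \<in> R" using assms unfolding frac_inv_def is_subring_def by blast
    then show "a \<in> R" by simp
  qed
  show "R \<subseteq> frac_inv R R" using assms unfolding frac_inv_def is_subring_def by auto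
qed

lemma frac_inv_v_op: "frac_inv R (v_op R A) = frac_inv R A"
proof
  have "A \<subseteq> v_op R A" unfolding v_op_def frac_inv_def by (auto simp: mult.commute)
  then show "frac_inv R (v_op R A) \<subseteq> frac_inv R A" unfolding frac_inv_def by auto
  show "frac_inv R A \<subseteq> frac_inv R (v_op R A)" unfolding v_op_def frac_inv_def by (auto simp: mult.commute)
qed

definition GV_generators :: "'k::field set \<Rightarrow> 'k set \<Rightarrow> bool" where
  "GV_generators R F \<longleftrightarrow> finite F \<and> F \<subseteq> R \<and> frac_inv R F \<subseteq> R"

lemma GV_iff:
  assumes R: "is_subring R"
  shows "J \<in> GV R \<longleftrightarrow> (\<exists>F. GV_generators R F \<and> J = ideal_span R F)"
proof
  assume "J \<in> GV R"
  then obtain F where F: "finite F" "F \<subseteq> R" "J = ideal_span R F" and v: "v_op R J = R"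
    unfolding GV_def fin_gen_ideal_def ideal_span_def by blast
  have "frac_inv R F = R"
    using frac_inv_v_op[of R J] v frac_inv_self[OF R] frac_inv_ideal_span[OF R F(1,2)] F(3) by simp
  with F show "\<exists>F. GV_generators R F \<and> J = ideal_span R F" unfolding GV_generators_def by blast
next
  assume "\<exists>F. GV_generators R F \<and> J = ideal_span R F"
  then obtain F where F: "finite F" "F \<subseteq> R" "frac_inv R F \<subseteq> R" and J: "J = ideal_span R F"
    unfolding GV_generators_def by blast
  have "frac_inv R J = R"
  proof
    show "frac_inv R J \<subseteq> R" using frac_inv_ideal_span[OF R F(1,2)] F(3) J by simp
    show "R \<subseteq> frac_inv R J"
      using ideal_span_subset[OF R F(2)] R J unfolding frac_inv_def is_subring_def by blast
  qed
  then have "v_op R J = R" unfolding v_op_def using frac_inv_self[OF R] by simp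
  moreover have "fin_gen_ideal R J" unfolding fin_gen_ideal_def
    using is_ideal_ideal_span[OF R F(2)] F(1,2) J unfolding ideal_span_def by blast
  ultimately show "J \<in> GV R" unfolding GV_def by blast
qed

lemma GV_generators_one: "is_subring R \<Longrightarrow> GV_generators R {1}"
  unfolding GV_generators_def frac_inv_def is_subring_def by auto

lemma GV_generators_mult:
  assumes R: "is_subring R" and F: "GV_generators R F" and G: "GV_generators R G"
  shows "GV_generators R {f * g | f g. f \<in> F \<and> g \<in> G}"
  unfolding GV_generators_def
proof (intro conjI subsetI)
  show "finite {f * g | f g. f \<in> F \<and> g \<in> G}"
    using F G by (simp add: GV_generators_def finite_image_set2)
  show "x \<in> R" if "x \<in> {f * g | f g. f \<in> F \<and> g \<in> G}" for x
    using that F G R unfolding GV_generators_def is_subring_def by blast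
  fix a assume a: "a \<in> frac_inv R {f * g | f g. f \<in> F \<and> g \<in> G}"
  have "a * f \<in> frac_inv R G" if "f \<in> F" for f
    using a that unfolding frac_inv_def by (auto simp: mult.assoc)
  then have "a \<in> frac_inv R F" using G unfolding GV_generators_def frac_inv_def by blast
  then show "a \<in> R" using F unfolding GV_generators_def by blast
qed

lemma mult_subset_nonzero: "mult_subset D S \<Longrightarrow> s \<in> S \<Longrightarrow> s \<noteq> 0"
  unfolding mult_subset_def by blast

lemma loc_ring_iff:
  assumes S: "mult_subset D S"
  shows "a \<in> loc_ring D S \<longleftrightarrow> (\<exists>s\<in>S. s * a \<in> D)"
proof
  assume "a \<in> loc_ring D S"
  then obtain b s where a: "a = b / s" and "b \<in> D" "s \<in> S" unfolding loc_ring_def by blast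
  have "s \<noteq> 0" using \<open>s \<in> S\<close> mult_subset_nonzero[OF S] by blast
  then have "s * a = b" unfolding a by simp
  with \<open>b \<in> D\<close> \<open>s \<in> S\<close> show "\<exists>s\<in>S. s * a \<in> D" by blast
next
  assume "\<exists>s\<in>S. s * a \<in> D"
  then obtain s where s: "s \<in> S" "s * a \<in> D" by blast
  then have "a = (s * a) / s" using mult_subset_nonzero[OF S] by simp
  then show "a \<in> loc_ring D S" unfolding loc_ring_def using s by blast
qed

lemma subset_loc_ring:
  assumes S: "mult_subset D S"
  shows "D \<subseteq> loc_ring D S"
proof
  fix a assume "a \<in> D"
  then have "1 * a \<in> D" by simp
  moreover have "1 \<in> S" using S unfolding mult_subset_def by blast
  ultimately show "a \<in> loc_ring D S" unfolding loc_ring_iff[OF S] by blast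
qed

lemma vector_space_mult: "vector_space ((*) :: 'k::field \<Rightarrow> 'k \<Rightarrow> 'k)"
  by unfold_locales (simp_all add: algebra_simps)

lemma subring_imp_submod: "is_subring D \<Longrightarrow> is_submod (*) D D"
  unfolding is_subring_def is_submod_def by blast

context vector_space
begin

lemma loc_mod_iff:
  assumes S: "mult_subset D S"
  shows "y \<in> loc_mod scale S L \<longleftrightarrow> (\<exists>s\<in>S. scale s y \<in> L)"
proof
  assume "y \<in> loc_mod scale S L"
  then obtain x s where y: "y = scale (inverse s) x" and "x \<in> L" "s \<in> S" unfolding loc_mod_def by blast
  have "s \<noteq> 0" using \<open>s \<in> S\<close> mult_subset_nonzero[OF S] by blast
  then have "scale s y = x" unfolding y by simp
  with \<open>x \<in> L\<close> \<open>s \<in> S\<close> show "\<exists>s\<in>S. scale s y \<in> L" by blast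
next
  assume "\<exists>s\<in>S. scale s y \<in> L"
  then obtain s where s: "s \<in> S" "scale s y \<in> L" by blast
  then have "y = scale (inverse s) (scale s y)" using mult_subset_nonzero[OF S] by simp
  then show "y \<in> loc_mod scale S L" unfolding loc_mod_def using s by blast
qed

lemma subset_loc_mod:
  assumes S: "mult_subset D S"
  shows "L \<subseteq> loc_mod scale S L"
proof
  fix x assume "x \<in> L"
  then have "scale 1 x \<in> L" by simp
  moreover have "1 \<in> S" using S unfolding mult_subset_def by blast
  ultimately show "x \<in> loc_mod scale S L" unfolding loc_mod_iff[OF S] by blast
qed

lemma loc_mod_mono: "A \<subseteq> B \<Longrightarrow> loc_mod scale S A \<subseteq> loc_mod scale S B"
  unfolding loc_mod_def by blast

lemma span_loc_mod:
  assumes "mult_subset D S"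
  shows "span (loc_mod scale S A) = span A"
proof
  have "loc_mod scale S A \<subseteq> span A"
  proof
    fix y assume "y \<in> loc_mod scale S A"
    then obtain x s where "y = scale (inverse s) x" "x \<in> A" unfolding loc_mod_def by blast
    then show "y \<in> span A" by (simp add: span_base span_scale)
  qed
  then show "span (loc_mod scale S A) \<subseteq> span A" using span_mono[of _ "span A"] by (simp add: span_span)
  show "span A \<subseteq> span (loc_mod scale S A)" using span_mono[OF subset_loc_mod[OF assms]] .
qed

lemma loc_mod_common_denominator:
  assumes S: "mult_subset D S" and L: "is_submod scale D L"
    and X: "finite X" "X \<subseteq> loc_mod scale S L"
  shows "\<exists>s\<in>S. \<forall>x\<in>X. scale s x \<in> L"
  using X
proof (induction X rule: finite_induct)
  case empty
  then show ?case using S unfolding mult_subset_def by auto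
next
  case (insert y X)
  obtain s where s: "s \<in> S" "\<forall>x\<in>X. scale s x \<in> L" using insert by auto
  obtain t where t: "t \<in> S" "scale t y \<in> L" using insert.prems loc_mod_iff[OF S] by auto
  have "s \<in> D" "t \<in> D" "s * t \<in> S" using s(1) t(1) S unfolding mult_subset_def by auto
  have "scale (s * t) x \<in> L" if "x \<in> insert y X" for x
  proof (cases "x = y")
    case True
    have "scale s (scale t y) \<in> L" using L \<open>s \<in> D\<close> t(2) unfolding is_submod_def by blast
    then show ?thesis using True by simp
  next
    case False
    then have "scale t (scale s x) \<in> L" using L \<open>t \<in> D\<close> s(2) that unfolding is_submod_def by blast
    then show ?thesis by (simp add: mult.commute)
  qed
  with \<open>s * t \<in> S\<close> show ?case by blast
qed

lemma submod_loc_mod: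
  assumes S: "mult_subset D S" and L: "is_submod scale D L"
  shows "is_submod scale (loc_ring D S) (loc_mod scale S L)"
  unfolding is_submod_def
proof (intro conjI ballI)
  have "0 \<in> L" using L unfolding is_submod_def by blast
  then show "0 \<in> loc_mod scale S L" using subset_loc_mod[OF S] by blast
next
  fix x y assume "x \<in> loc_mod scale S L" "y \<in> loc_mod scale S L"
  then obtain s where s: "s \<in> S" "scale s x \<in> L" "scale s y \<in> L"
    using loc_mod_common_denominator[OF S L, of "{x, y}"] by auto
  then have "scale s (x + y) \<in> L" using L unfolding is_submod_def by (simp add: scale_right_distrib)
  with s(1) show "x + y \<in> loc_mod scale S L" unfolding loc_mod_iff[OF S] by blast
next
  fix a x assume "a \<in> loc_ring D S" "x \<in> loc_mod scale S L"
  then obtain s t where st: "t \<in> S" "t * a \<in> D" "s \<in> S" "scale s x \<in> L"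
    unfolding loc_mod_iff[OF S] loc_ring_iff[OF S] by blast
  have "scale (t * s) (scale a x) = scale (t * a) (scale s x)"
    by (simp add: mult.commute mult.left_commute)
  also have "\<dots> \<in> L" using L st unfolding is_submod_def by blast
  finally show "scale a x \<in> loc_mod scale S L"
    unfolding loc_mod_iff[OF S] using st(1,3) S unfolding mult_subset_def by blast
qed

end

lemma loc_ring_eq_loc_mod: "loc_ring D S = loc_mod (*) S D"
  unfolding loc_ring_def loc_mod_def by (auto simp: divide_inverse mult.commute)

lemma subring_loc_ring:
  fixes D S :: "'k::field set"
  assumes D: "is_subring D" and S: "mult_subset D S"
  shows "is_subring (loc_ring D S)"
proof -
  have DS: "is_submod (*) (loc_ring D S) (loc_ring D S)"
    using vector_space.submod_loc_mod[OF vector_space_mult S subring_imp_submod[OF D]]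
    unfolding loc_ring_eq_loc_mod .
  have "1 \<in> D" "0 - 1 \<in> D" using D unfolding is_subring_def by blast+
  then have one: "1 \<in> loc_ring D S" and minus_one: "-1 \<in> loc_ring D S"
    using subset_loc_ring[OF S] by auto
  show ?thesis unfolding is_subring_def
  proof (intro conjI ballI)
    show "0 \<in> loc_ring D S" using DS unfolding is_submod_def by blast
    show "1 \<in> loc_ring D S" by (rule one)
    fix a b assume a: "a \<in> loc_ring D S" and b: "b \<in> loc_ring D S"
    show "a + b \<in> loc_ring D S" "a * b \<in> loc_ring D S"
      using DS a b unfolding is_submod_def by blast+
    have "a + (-1) * b \<in> loc_ring D S" using DS a b minus_one unfolding is_submod_def by blast
    then show "a - b \<in> loc_ring D S" by simp
  qed
qed

lemma GV_generators_loc_ring: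
  assumes D: "is_subring D" and S: "mult_subset D S" and F: "GV_generators D F"
  shows "GV_generators (loc_ring D S) F"
  unfolding GV_generators_def
proof (intro conjI subsetI)
  show "finite F" using F by (simp add: GV_generators_def)
  show "f \<in> loc_ring D S" if "f \<in> F" for f
    using that F subset_loc_ring[OF S] by (auto simp: GV_generators_def)
  fix a assume "a \<in> frac_inv (loc_ring D S) F"
  then have "(\<lambda>f. a * f) ` F \<subseteq> loc_mod (*) S D"
    unfolding frac_inv_def loc_ring_eq_loc_mod by auto
  moreover have "finite ((\<lambda>f. a * f) ` F)" using F by (simp add: GV_generators_def)
  ultimately obtain s where s: "s \<in> S" "\<forall>x\<in>(\<lambda>f. a * f) ` F. s * x \<in> D"
    using vector_space.loc_mod_common_denominator[OF vector_space_mult S subring_imp_submod[OF D]]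
    by blast
  then have "s * a \<in> frac_inv D F" unfolding frac_inv_def by (simp add: mult.assoc)
  then have "s * a \<in> D" using F unfolding GV_generators_def by blast
  then show "a \<in> loc_ring D S" using s(1) loc_ring_iff[OF S] by blast
qed

context vector_space
begin

lemma w_clI:
  assumes R: "is_subring R" and N: "is_submod scale R N"
    and x: "x \<in> span N" and F: "GV_generators R F" and FN: "\<forall>f\<in>F. scale f x \<in> N"
  shows "x \<in> w_cl scale R N"
proof -
  have "scale j x \<in> N" if "j \<in> ideal_span R F" for j
  proof -
    from that obtain c where j: "j = (\<Sum>f\<in>F. c f * f)" "\<forall>f\<in>F. c f \<in> R"
      unfolding ideal_span_def by blast
    have "scale j x = (\<Sum>f\<in>F. scale (c f) (scale f x))" unfolding j(1) scale_sum_left by simp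
    also have "\<dots> \<in> N"
      by (rule sum_mem_add_closed) (use N j(2) FN in \<open>auto simp: is_submod_def simp del: scale_scale\<close>)
    finally show ?thesis .
  qed
  then show ?thesis using x F GV_iff[OF R] unfolding w_cl_def by blast
qed

lemma w_clE:
  assumes R: "is_subring R" and "x \<in> w_cl scale R N"
  obtains F where "GV_generators R F" "x \<in> span N" "\<forall>f\<in>F. scale f x \<in> N"
proof -
  obtain J where x: "x \<in> span N" and J: "J \<in> GV R" and JN: "\<forall>j\<in>J. scale j x \<in> N"
    using assms(2) unfolding w_cl_def by blast
  obtain F where F: "GV_generators R F" "J = ideal_span R F" using J GV_iff[OF R] by blast
  have "\<forall>f\<in>F. scale f x \<in> N" using JN F mem_ideal_span[OF R] by (auto simp: GV_generators_def)
  with F(1) x that show ?thesis by blast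
qed

lemma w_cl_mono: "A \<subseteq> B \<Longrightarrow> w_cl scale R A \<subseteq> w_cl scale R B"
  using span_mono[of A B] unfolding w_cl_def by blast

lemma subset_w_cl:
  assumes R: "is_subring R" and N: "is_submod scale R N"
  shows "N \<subseteq> w_cl scale R N"
proof
  fix x assume "x \<in> N"
  then show "x \<in> w_cl scale R N" using w_clI[OF R N span_base GV_generators_one[OF R]] by simp
qed

lemma GV_generators_common:
  assumes R: "is_subring R" and N: "is_submod scale R N" and X: "finite X"
    and "\<forall>x\<in>X. \<exists>F. GV_generators R F \<and> (\<forall>f\<in>F. scale f x \<in> N)"
  shows "\<exists>H. GV_generators R H \<and> (\<forall>x\<in>X. \<forall>h\<in>H. scale h x \<in> N)"
  using X assms(4)
proof (induction X rule: finite_induct)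
  case empty
  then show ?case using GV_generators_one[OF R] by blast
next
  case (insert y X)
  obtain H where H: "GV_generators R H" "\<forall>x\<in>X. \<forall>h\<in>H. scale h x \<in> N" using insert by auto
  obtain F where F: "GV_generators R F" "\<forall>f\<in>F. scale f y \<in> N" using insert.prems by auto
  have "scale (h * f) x \<in> N" if "x \<in> insert y X" "h \<in> H" "f \<in> F" for x h f
  proof -
    have "h \<in> R" "f \<in> R" using H(1) F(1) that(2,3) unfolding GV_generators_def by auto
    then have "scale h (scale f y) \<in> N" "x \<in> X \<Longrightarrow> scale f (scale h x) \<in> N"
      using that(2,3) N H(2) F(2) unfolding is_submod_def by blast+
    then show ?thesis using that(1) by (auto simp: mult.commute)
  qed
  then show ?case using GV_generators_mult[OF R H(1) F(1)] by blast
qed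

lemma w_cl_w_cl_subset:
  assumes R: "is_subring R" and N: "is_submod scale R N"
  shows "w_cl scale R (w_cl scale R N) \<subseteq> w_cl scale R N"
proof
  fix x assume "x \<in> w_cl scale R (w_cl scale R N)"
  then obtain G where G: "GV_generators R G" "x \<in> span (w_cl scale R N)"
    "\<forall>g\<in>G. scale g x \<in> w_cl scale R N" by (rule w_clE[OF R])
  have "\<exists>F. GV_generators R F \<and> (\<forall>f\<in>F. scale f y \<in> N)" if "y \<in> (\<lambda>g. scale g x) ` G" for y
  proof -
    have "y \<in> w_cl scale R N" using that G(3) by blast
    then obtain F where "GV_generators R F" "y \<in> span N" "\<forall>f\<in>F. scale f y \<in> N"
      by (rule w_clE[OF R])
    then show ?thesis by blast
  qed
  then obtain H where H: "GV_generators R H" "\<forall>g\<in>G. \<forall>h\<in>H. scale h (scale g x) \<in> N"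
    using GV_generators_common[OF R N, of "(\<lambda>g. scale g x) ` G"] G(1)
    by (auto simp: GV_generators_def)
  have "x \<in> span N"
    using G(2) span_mono[of "w_cl scale R N" "span N"] span_span unfolding w_cl_def by blast
  moreover have "\<forall>p\<in>{h * g | h g. h \<in> H \<and> g \<in> G}. scale p x \<in> N" using H(2) by auto
  ultimately show "x \<in> w_cl scale R N"
    using w_clI[OF R N] GV_generators_mult[OF R H(1) G(1)] by blast
qed

lemma w_cl_subset_w_cl_loc_ring:
  assumes D: "is_subring D" and S: "mult_subset D S" and N: "is_submod scale (loc_ring D S) N"
  shows "w_cl scale D N \<subseteq> w_cl scale (loc_ring D S) N"
proof
  fix x assume "x \<in> w_cl scale D N"
  then obtain F where F: "GV_generators D F" "x \<in> span N" "\<forall>f\<in>F. scale f x \<in> N"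
    by (rule w_clE[OF D])
  show "x \<in> w_cl scale (loc_ring D S) N"
    using w_clI[OF subring_loc_ring[OF D S] N F(2) GV_generators_loc_ring[OF D S F(1)] F(3)] .
qed

lemma w_cl_loc_mod_subset:
  assumes D: "is_subring D" and S: "mult_subset D S" and L: "is_submod scale D L"
  shows "w_cl scale D (loc_mod scale S L) \<subseteq> loc_mod scale S (w_cl scale D L)"
proof
  fix x assume "x \<in> w_cl scale D (loc_mod scale S L)"
  then obtain F where F: "GV_generators D F" "x \<in> span (loc_mod scale S L)"
    "\<forall>f\<in>F. scale f x \<in> loc_mod scale S L" by (rule w_clE[OF D])
  obtain s where s: "s \<in> S" "\<forall>f\<in>F. scale s (scale f x) \<in> L"
    using loc_mod_common_denominator[OF S L, of "(\<lambda>f. scale f x) ` F"] F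
    by (auto simp: GV_generators_def)
  have "scale s x \<in> span L" using F(2) span_loc_mod[OF S] span_scale by blast
  moreover have "\<forall>f\<in>F. scale f (scale s x) \<in> L" using s(2) by (simp add: mult.commute)
  ultimately have "scale s x \<in> w_cl scale D L" using w_clI[OF D L] F(1) by blast
  with s(1) show "x \<in> loc_mod scale S (w_cl scale D L)" unfolding loc_mod_iff[OF S] by blast
qed

lemma loc_mod_w_cl_subset:
  assumes D: "is_subring D" and S: "mult_subset D S" and L: "is_submod scale D L"
  shows "loc_mod scale S (w_cl scale D L) \<subseteq> w_cl scale (loc_ring D S) (loc_mod scale S L)"
proof
  fix y assume "y \<in> loc_mod scale S (w_cl scale D L)"
  then obtain s where s: "s \<in> S" "scale s y \<in> w_cl scale D L" using loc_mod_iff[OF S] by blast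
  obtain F where F: "GV_generators D F" "scale s y \<in> span L" "\<forall>f\<in>F. scale f (scale s y) \<in> L"
    using s(2) by (rule w_clE[OF D])
  have "s \<noteq> 0" using s(1) mult_subset_nonzero[OF S] by blast
  then have "y = scale (inverse s) (scale s y)" by simp
  then have "y \<in> span (loc_mod scale S L)" using F(2) span_scale span_loc_mod[OF S] by metis
  moreover have "\<forall>f\<in>F. scale f y \<in> loc_mod scale S L"
    using F(3) s(1) unfolding loc_mod_iff[OF S] by (auto simp: mult.commute)
  ultimately show "y \<in> w_cl scale (loc_ring D S) (loc_mod scale S L)"
    using w_clI[OF subring_loc_ring[OF D S] submod_loc_mod[OF S L]] GV_generators_loc_ring[OF D S F(1)]
    by blast
qed

end

theorem lemma3p2:
  fixes scale :: "'k::field \<Rightarrow> 'v::ab_group_add \<Rightarrow> 'v"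
    and D S :: "'k set" and M L :: "'v set"
  assumes vs: "vector_space scale"
    and D: "is_subring D" and K: "has_quotient_field D"
    and S: "mult_subset D S"
    and M: "is_submod scale D M" and Mw: "w_cl scale D M = M"
    and L: "is_submod scale D L" and LM: "L \<subseteq> M" and L0: "L \<noteq> {0}"
  shows "(w_cl scale D L = L \<longrightarrow>
            w_cl scale D (loc_mod scale S L \<inter> M) = loc_mod scale S L \<inter> M)
       \<and> (w_cl scale (loc_ring D S) (loc_mod scale S L) = loc_mod scale S L \<longrightarrow>
            w_cl scale D (loc_mod scale S L \<inter> M) = loc_mod scale S L \<inter> M)
       \<and> loc_mod scale S (w_cl scale D L) \<subseteq> w_cl scale (loc_ring D S) (loc_mod scale S L)
       \<and> w_cl scale (loc_ring D S) (loc_mod scale S (w_cl scale D L))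
           = w_cl scale (loc_ring D S) (loc_mod scale S L)"
proof -
  interpret vector_space scale by (rule vs)
  let ?DS = "loc_ring D S" and ?LS = "loc_mod scale S L"
  have LS: "is_submod scale ?DS ?LS" by (rule submod_loc_mod[OF S L])
  then have "is_submod scale D (?LS \<inter> M)"
    using M subset_loc_ring[OF S] unfolding is_submod_def by blast
  moreover have "w_cl scale D (?LS \<inter> M) \<subseteq> w_cl scale D ?LS \<inter> M"
    using w_cl_mono[of "?LS \<inter> M" ?LS D] w_cl_mono[of "?LS \<inter> M" M D] Mw by blast
  ultimately have closed: "w_cl scale D (?LS \<inter> M) = ?LS \<inter> M" if "w_cl scale D ?LS \<subseteq> ?LS"
    using that subset_w_cl[OF D] by blast
  have loc_w_cl: "loc_mod scale S (w_cl scale D L) \<subseteq> w_cl scale ?DS ?LS"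
    by (rule loc_mod_w_cl_subset[OF D S L])
  have "w_cl scale ?DS (loc_mod scale S (w_cl scale D L)) \<subseteq> w_cl scale ?DS (w_cl scale ?DS ?LS)"
    by (rule w_cl_mono[OF loc_w_cl])
  also have "\<dots> \<subseteq> w_cl scale ?DS ?LS" by (rule w_cl_w_cl_subset[OF subring_loc_ring[OF D S] LS])
  finally have "w_cl scale ?DS (loc_mod scale S (w_cl scale D L)) = w_cl scale ?DS ?LS"
    using w_cl_mono[OF loc_mod_mono[OF subset_w_cl[OF D L]]] by blast
  with loc_w_cl closed w_cl_loc_mod_subset[OF D S L] w_cl_subset_w_cl_loc_ring[OF D S LS]
  show ?thesis by auto
qed

end
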